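(* Assume each $f_i$ is $\sigma_i$-strongly convex with $L_i$-Lipschitz continuous gradient. Then for all $\lambda,\bar\lambda\in\mathbb{D}$, \[ d(\lambda)\ \ge\ d(\bar\lambda)+\langle \nabla d(\bar\lambda),\lambda-\bar\lambda\rangle-\tfrac12\|\lambda-\bar\lambda\|_W^2 . \]
   Context: Standing setup. Consider $\min_{z}\ f(z)=\sum_{i=1}^M f_i(z_i)$ subject to $Az=b$, $Cz\le c$, where $z=(z_1,\dots,z_M)$, $z_i\in\mathbb{R}^{n_i}$, $n=\sum_i n_i$, $A\in\mathbb{R}^{p\times n}$, $C\in\mathbb{R}^{q\times n}$, $b\in\mathbb{R}^p$, $c\in\mathbb{R}^q$, and each $f_i:\mathbb{R}^{n_i}\to\mathbb{R}$ is convex. The rows are partitioned into $\bar M$ blocks: $A$ has blocks $A_{ji}\in\mathbb{R}^{p_j\times n_i}$ and $C$ has blocks $C_{ji}\in\mathbb{R}^{q_j\times n_i}$ ($j=1,\dots,\bar M$, $i=1,\dots,M$, $\sum_j p_j=p$, $\sum_j q_j=q$). A matrix $E\in\{0,1\}^{\bar M\times M}$ is given such that $E_{ji}=0$ implies $A_{ji}=0$ and $C_{ji}=0$. Let $\bar{\mathcal N}_i=\{j: E_{ji}\neq 0\}$ and $\mathcal N_j=\{i:E_{ji}\ne 0\}$. Let $G=\begin{bmatrix}A\\ C\end{bmatrix}$, $g=\begin{bmatrix}b\\ c\end{bmatrix}$, dual variable $\lambda=(\nu,\mu)\in\mathbb{R}^p\times\mathbb{R}^q$, and $\mathbb{D}=\mathbb{R}^p\times\mathbb{R}^q_+$.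 The Lagrangian is $\mathcal L(z,\lambda)=f(z)+\langle\lambda,Gz-g\rangle$ and the dual function is $d(\lambda)=\min_{z\in\mathbb{R}^n}\mathcal L(z,\lambda)$; under strong convexity of $f$ it is differentiable with $\nabla d(\lambda)=Gz(\lambda)-g$, where $z(\lambda)$ is the unique minimizer of $\mathcal L(\cdot,\lambda)$. For each $i$, let $L_{d_i}=\big\|\begin{bmatrix}[A_{ji}]_{j\in\bar{\mathcal N}_i}\\ [C_{ji}]_{j\in\bar{\mathcal N}_i}\end{bmatrix}\big\|^2/\sigma_i$ (spectral norm of the stacked column blocks). Let $W=\mathrm{diag}(W_\nu,W_\mu)$ with $W_\nu=\mathrm{diag}\big(\sum_{i\in\mathcal N_j}L_{d_i}I_{p_j};\ j=1,\dots,\bar M\big)$ and $W_\mu=\mathrm{diag}\big(\sum_{i\in\mathcal N_j}L_{d_i}I_{q_j};\ j=1,\dots,\bar M\big)$. For $x$ and positive semidefinite $W$, $\|x\|_W=\sqrt{x^TWx}$. *)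

theory Defs
  imports Complex_Main
begin

text \<open>Vectors of R^m are represented as functions nat => real vanishing at indices >= m.
  Block vectors z = (z_1,...,z_M), z_i in R^(n i), are functions nat => nat => real
  (block index, coordinate).  Dual variables nu, mu are functions nat => nat => real
  indexed by (row block j, row r).\<close>

definition vecs :: "nat \<Rightarrow> (nat \<Rightarrow> real) set" where
  "vecs m = {x. \<forall>k. m \<le> k \<longrightarrow> x k = 0}"

definition innern :: "nat \<Rightarrow> (nat \<Rightarrow> real) \<Rightarrow> (nat \<Rightarrow> real) \<Rightarrow> real" where
  "innern m x y = (\<Sum>k<m. x k * y k)"

definition normn :: "nat \<Rightarrow> (nat \<Rightarrow> real) \<Rightarrow> real" where
  "normn m x = sqrt (innern m x x)"

definition strongly_convex_vec :: "nat \<Rightarrow> ((nat \<Rightarrow> real) \<Rightarrow> real) \<Rightarrow> real \<Rightarrow> bool" where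
  "strongly_convex_vec m f \<sigma> \<longleftrightarrow>
     (\<forall>x\<in>vecs m. \<forall>y\<in>vecs m. \<forall>t::real. 0 \<le> t \<and> t \<le> 1 \<longrightarrow>
        f (\<lambda>k. t * x k + (1 - t) * y k)
          \<le> t * f x + (1 - t) * f y - \<sigma> / 2 * t * (1 - t) * (normn m (\<lambda>k. x k - y k))\<^sup>2)"

definition has_grad_vec :: "nat \<Rightarrow> ((nat \<Rightarrow> real) \<Rightarrow> real) \<Rightarrow> (nat \<Rightarrow> real) \<Rightarrow> (nat \<Rightarrow> real) \<Rightarrow> bool" where
  "has_grad_vec m f g x \<longleftrightarrow> g \<in> vecs m \<and>
     (\<forall>e>0. \<exists>\<delta>>0. \<forall>h\<in>vecs m. normn m h < \<delta> \<longrightarrow>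
        \<bar>f (\<lambda>k. x k + h k) - f x - innern m g h\<bar> \<le> e * normn m h)"

definition lipschitz_grad_vec :: "nat \<Rightarrow> ((nat \<Rightarrow> real) \<Rightarrow> real) \<Rightarrow> real \<Rightarrow> bool" where
  "lipschitz_grad_vec m f L \<longleftrightarrow>
     (\<exists>gf. (\<forall>x\<in>vecs m. has_grad_vec m f (gf x) x) \<and>
        (\<forall>x\<in>vecs m. \<forall>y\<in>vecs m. normn m (\<lambda>k. gf x k - gf y k) \<le> L * normn m (\<lambda>k. x k - y k)))"

definition zdom :: "nat \<Rightarrow> (nat \<Rightarrow> nat) \<Rightarrow> (nat \<Rightarrow> nat \<Rightarrow> real) set" where
  "zdom M n = {z. \<forall>i k. \<not> (i < M \<and> k < n i) \<longrightarrow> z i k = 0}"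

definition blk_mult :: "nat \<Rightarrow> (nat \<Rightarrow> nat) \<Rightarrow> (nat \<Rightarrow> nat \<Rightarrow> nat \<Rightarrow> nat \<Rightarrow> real)
    \<Rightarrow> (nat \<Rightarrow> nat \<Rightarrow> real) \<Rightarrow> nat \<Rightarrow> nat \<Rightarrow> real" where
  "blk_mult M n A z j r = (\<Sum>i<M. \<Sum>k<n i. A j i r k * z i k)"

definition lagrangian where
  "lagrangian M Mb n p q A C b c f z \<nu> \<mu> =
     (\<Sum>i<M. f i (z i))
     + (\<Sum>j<Mb. \<Sum>r<p j. \<nu> j r * (blk_mult M n A z j r - b j r))
     + (\<Sum>j<Mb. \<Sum>r<q j. \<mu> j r * (blk_mult M n C z j r - c j r))"

definition dual_fun where
  "dual_fun M Mb n p q A C b c f \<nu> \<mu> =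
     (INF z\<in>zdom M n. lagrangian M Mb n p q A C b c f z \<nu> \<mu>)"

definition zopt where
  "zopt M Mb n p q A C b c f \<nu> \<mu> =
     (THE z. z \<in> zdom M n \<and>
        (\<forall>z'\<in>zdom M n. lagrangian M Mb n p q A C b c f z \<nu> \<mu>
                         \<le> lagrangian M Mb n p q A C b c f z' \<nu> \<mu>))"

text \<open>grad d(lambda) = G z(lambda) - g, split into its nu- and mu-parts.\<close>
definition dual_grad_nu where
  "dual_grad_nu M Mb n p q A C b c f \<nu> \<mu> j r =
     blk_mult M n A (zopt M Mb n p q A C b c f \<nu> \<mu>) j r - b j r"

definition dual_grad_mu where
  "dual_grad_mu M Mb n p q A C b c f \<nu> \<mu> j r =
     blk_mult M n C (zopt M Mb n p q A C b c f \<nu> \<mu>) j r - c j r"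

text \<open>Spectral norm of the stacked column block [A_ji ; C_ji]_{j in Nbar_i}.\<close>
definition col_spec_norm where
  "col_spec_norm Mb n p q A C E i =
     (SUP x\<in>{x\<in>vecs (n i). normn (n i) x \<le> 1}.
        sqrt (\<Sum>j\<in>{j. j < Mb \<and> E j i}.
           (\<Sum>r<p j. (\<Sum>k<n i. A j i r k * x k)\<^sup>2) + (\<Sum>r<q j. (\<Sum>k<n i. C j i r k * x k)\<^sup>2)))"

definition Ld where
  "Ld Mb n p q A C E \<sigma> i = (col_spec_norm Mb n p q A C E i)\<^sup>2 / \<sigma> i"

definition Wweight where
  "Wweight M Mb n p q A C E \<sigma> j = (\<Sum>i\<in>{i. i < M \<and> E j i}. Ld Mb n p q A C E \<sigma> i)"

definition Wnorm_sq where
  "Wnorm_sq M Mb n p q A C E \<sigma> \<nu> \<mu> =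
     (\<Sum>j<Mb. Wweight M Mb n p q A C E \<sigma> j * ((\<Sum>r<p j. (\<nu> j r)\<^sup>2) + (\<Sum>r<q j. (\<mu> j r)\<^sup>2)))"

definition in_D :: "nat \<Rightarrow> (nat \<Rightarrow> nat) \<Rightarrow> (nat \<Rightarrow> nat \<Rightarrow> real) \<Rightarrow> bool" where
  "in_D Mb q \<mu> \<longleftrightarrow> (\<forall>j<Mb. \<forall>r<q j. 0 \<le> \<mu> j r)"

end

theory Submission
  imports Defs
begin

(* For the Lagrangian L(z, lambda) = f(z) + <lambda, G z - g> with z(lambda') its unique
   minimiser and zs = z(lambda'), linearity in lambda gives, for every primal z,
     L(z, lambda) = L(z, lambda') + <grad d(lambda'), lambda - lambda'> + <lambda - lambda', G (z - zs)>.
   Strong convexity yields quadratic growth L(z, lambda') >= d(lambda') + sum_i (sigma_i/2)|z_i - zs_i|^2,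
   and, column by column, sparsity, Young's inequality and the spectral norm of the stacked
   column block bound the coupling term below by
     -sum_i (sigma_i/2)|z_i - zs_i|^2 - (1/2)|lambda - lambda'|_W^2.
   Adding up and taking the infimum over z gives the claim. *)

lemma innern_nonneg: "0 \<le> innern m x x"
  unfolding innern_def by (auto intro: sum_nonneg)

lemma normn_nonneg: "0 \<le> normn m x"
  unfolding normn_def by (simp add: innern_nonneg)

lemma normn_sq: "(normn m x)\<^sup>2 = innern m x x"
  unfolding normn_def using innern_nonneg by simp

lemma innern_scale_right: "innern m g (\<lambda>k. t * h k) = t * innern m g h"
  unfolding innern_def by (simp add: sum_distrib_left algebra_simps)

lemma innern_scale_both: "innern m (\<lambda>k. t * h k) (\<lambda>k. t * h k) = t\<^sup>2 * innern m h h"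
  unfolding innern_def by (simp add: sum_distrib_left algebra_simps power2_eq_square)

lemma normn_scale: "0 \<le> t \<Longrightarrow> normn m (\<lambda>k. t * h k) = t * normn m h"
  unfolding normn_def innern_scale_both by (simp add: real_sqrt_mult)

lemma coord_sq_le_innern: "k < m \<Longrightarrow> (x k)\<^sup>2 \<le> innern m x x"
  unfolding innern_def power2_eq_square by (rule member_le_sum) auto

lemma has_grad_vec_directional:
  assumes g: "has_grad_vec m f g x" and h: "h \<in> vecs m"
  shows "((\<lambda>t. (f (\<lambda>k. x k + t * h k) - f x) / t) \<longlongrightarrow> innern m g h) (at_right 0)"
proof (rule tendstoI)
  fix e :: real assume e: "0 < e"
  define N where "N = normn m h"
  have N0: "0 \<le> N" by (simp add: N_def normn_nonneg)
  define e' where "e' = e / (2 * (N + 1))"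
  have e': "0 < e'" using e N0 by (simp add: e'_def)
  obtain \<delta> where \<delta>: "0 < \<delta>" and rem: "\<forall>h\<in>vecs m. normn m h < \<delta> \<longrightarrow>
      \<bar>f (\<lambda>k. x k + h k) - f x - innern m g h\<bar> \<le> e' * normn m h"
    using g e' unfolding has_grad_vec_def by blast
  show "\<forall>\<^sub>F t in at_right 0. dist ((f (\<lambda>k. x k + t * h k) - f x) / t) (innern m g h) < e"
    unfolding eventually_at_right_field
  proof (intro exI conjI allI impI)
    show "(0::real) < \<delta> / (N + 1)" using \<delta> N0 by simp
    fix t :: real assume t: "0 < t" "t < \<delta> / (N + 1)"
    have "t * (N + 1) < \<delta>" using t N0 by (simp add: pos_less_divide_eq)
    then have "t * N < \<delta>" using t by (simp add: distrib_left)
    moreover have th: "(\<lambda>k. t * h k) \<in> vecs m" using h by (simp add: vecs_def)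
    moreover have "normn m (\<lambda>k. t * h k) = t * N" using t by (simp add: normn_scale N_def)
    ultimately have "\<bar>f (\<lambda>k. x k + t * h k) - f x - t * innern m g h\<bar> \<le> e' * (t * N)"
      using rem[rule_format, OF th] by (simp add: innern_scale_right)
    then have "\<bar>(f (\<lambda>k. x k + t * h k) - f x) / t - innern m g h\<bar> \<le> e' * N"
      using t by (simp add: field_simps flip: abs_mult)
    also have "e' * N < e" using e N0 by (simp add: e'_def field_simps add_nonneg_pos)
    finally show "dist ((f (\<lambda>k. x k + t * h k) - f x) / t) (innern m g h) < e"
      by (simp add: dist_real_def)
  qed
qed

(* First-order characterisation of strong convexity: f lies above its tangent plus the quadratic
   term (sigma/2) |y - x|^2.  Obtained by letting t tend to 0 in the defining chord inequality. *)
lemma strongly_convex_first_order: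
  assumes sc: "strongly_convex_vec m f \<sigma>" and g: "has_grad_vec m f g x"
    and x: "x \<in> vecs m" and y: "y \<in> vecs m"
  shows "f x + innern m g (\<lambda>k. y k - x k)
           + \<sigma>/2 * innern m (\<lambda>k. y k - x k) (\<lambda>k. y k - x k) \<le> f y"
proof -
  define h where "h = (\<lambda>k. y k - x k)"
  define D where "D = innern m h h"
  have h: "h \<in> vecs m" using x y by (simp add: vecs_def h_def)
  have chord: "(f (\<lambda>k. x k + t * h k) - f x) / t \<le> f y - f x - \<sigma>/2 * (1 - t) * D"
    if t: "0 < t" "t \<le> 1" for t
  proof -
    have "(\<lambda>k. t * y k + (1 - t) * x k) = (\<lambda>k. x k + t * h k)"
      by (auto simp: h_def algebra_simps)
    moreover have "f (\<lambda>k. t * y k + (1 - t) * x k)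
        \<le> t * f y + (1 - t) * f x - \<sigma>/2 * t * (1 - t) * (normn m h)\<^sup>2"
      using sc y x t unfolding strongly_convex_vec_def h_def by simp
    ultimately have "f (\<lambda>k. x k + t * h k) \<le> t * f y + (1 - t) * f x - \<sigma>/2 * t * (1 - t) * D"
      by (simp add: D_def normn_sq)
    then show ?thesis using t by (simp add: field_simps)
  qed
  have "((\<lambda>t. f y - f x - \<sigma>/2 * (1 - t) * D) \<longlongrightarrow> f y - f x - \<sigma>/2 * (1 - 0) * D) (at_right 0)"
    by (intro tendsto_intros)
  moreover have "\<forall>\<^sub>F t in at_right 0.
      (f (\<lambda>k. x k + t * h k) - f x) / t \<le> f y - f x - \<sigma>/2 * (1 - t) * D"
    unfolding eventually_at_right_field using chord by (intro exI[of _ 1]) auto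
  ultimately have "innern m g h \<le> f y - f x - \<sigma>/2 * (1 - 0) * D"
    using has_grad_vec_directional[OF g h] by (intro tendsto_le[OF trivial_limit_at_right_real])
  then show ?thesis by (simp add: h_def D_def)
qed

(* A function with a gradient at x is sequentially continuous at x (coordinatewise convergence
   suffices in finite dimension). *)
lemma has_grad_vec_seq_continuous:
  assumes g: "has_grad_vec m f g x" and x: "x \<in> vecs m" and ys: "\<And>l. ys l \<in> vecs m"
    and lim: "\<And>k. (\<lambda>l. ys l k) \<longlonglongrightarrow> x k"
  shows "(\<lambda>l. f (ys l)) \<longlonglongrightarrow> f x"
proof -
  define hs where "hs l = (\<lambda>k. ys l k - x k)" for l
  have "(\<lambda>l. \<Sum>k<m. g k * (ys l k - x k)) \<longlonglongrightarrow> (\<Sum>k<m. g k * (x k - x k))"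
    by (intro tendsto_intros lim)
  then have lin: "(\<lambda>l. innern m g (hs l)) \<longlonglongrightarrow> 0" by (simp add: innern_def hs_def)
  have "(\<lambda>l. sqrt (\<Sum>k<m. (ys l k - x k) * (ys l k - x k)))
          \<longlonglongrightarrow> sqrt (\<Sum>k<m. (x k - x k) * (x k - x k))"
    by (intro tendsto_intros lim)
  then have small: "(\<lambda>l. normn m (hs l)) \<longlonglongrightarrow> 0" by (simp add: normn_def innern_def hs_def)
  obtain \<delta> where \<delta>: "0 < \<delta>" and rem: "\<forall>h\<in>vecs m. normn m h < \<delta> \<longrightarrow>
      \<bar>f (\<lambda>k. x k + h k) - f x - innern m g h\<bar> \<le> 1 * normn m h"
    using g unfolding has_grad_vec_def by (meson zero_less_one)
  have "\<forall>\<^sub>F l in sequentially. norm (f (ys l) - f x - innern m g (hs l)) \<le> norm (normn m (hs l)) * 1"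
    using order_tendstoD(2)[OF small \<delta>]
  proof (rule eventually_mono)
    fix l assume "normn m (hs l) < \<delta>"
    moreover have "hs l \<in> vecs m" "(\<lambda>k. x k + hs l k) = ys l"
      using ys[of l] x by (auto simp: vecs_def hs_def)
    ultimately show "norm (f (ys l) - f x - innern m g (hs l)) \<le> norm (normn m (hs l)) * 1"
      using rem normn_nonneg[of m "hs l"] by force
  qed
  then have "(\<lambda>l. f (ys l) - f x - innern m g (hs l)) \<longlonglongrightarrow> 0"
    by (rule tendsto_0_le[OF small])
  then have "(\<lambda>l. (f (ys l) - f x - innern m g (hs l)) + f x + innern m g (hs l)) \<longlonglongrightarrow> 0 + f x + 0"
    by (intro tendsto_add tendsto_const lin)
  then show ?thesis by simp
qed

(* A Cauchy criterion tailored to minimising sequences, whose mutual distances are controlled by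
   the harmonic terms 1/(k+1). *)
lemma cauchy_of_sq_bound:
  fixes X :: "nat \<Rightarrow> real"
  assumes s: "0 < s"
    and bound: "\<And>k l. (X k - X l)\<^sup>2 \<le> s * (inverse (real (Suc k)) + inverse (real (Suc l)))"
  shows "Cauchy X"
proof (rule metric_CauchyI)
  fix e :: real assume e: "0 < e"
  obtain N where N: "2 * s / e\<^sup>2 < real N" using reals_Archimedean2 by blast
  have pos: "0 < 2 * s / e\<^sup>2" using s e by simp
  have iN: "inverse (real (Suc N)) < e\<^sup>2 / (2*s)"
  proof -
    have "2 * s / e\<^sup>2 < real (Suc N)" using N by simp
    then have "inverse (real (Suc N)) < inverse (2 * s / e\<^sup>2)"
      using pos by (intro less_imp_inverse_less) auto
    then show ?thesis by simp
  qed
  show "\<exists>N. \<forall>k\<ge>N. \<forall>l\<ge>N. dist (X k) (X l) < e"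
  proof (intro exI allI impI)
    fix k l assume k: "N \<le> k" and l: "N \<le> l"
    have "inverse (real (Suc k)) \<le> inverse (real (Suc N))"
      and "inverse (real (Suc l)) \<le> inverse (real (Suc N))"
      using k l by (simp_all add: le_imp_inverse_le)
    then have "inverse (real (Suc k)) + inverse (real (Suc l)) \<le> 2 * inverse (real (Suc N))"
      by linarith
    then have "(X k - X l)\<^sup>2 \<le> s * (2 * inverse (real (Suc N)))"
      using bound[of k l] s by (meson mult_left_mono less_imp_le order_trans)
    also have "\<dots> < s * (2 * (e\<^sup>2 / (2*s)))" using iN s by (intro mult_strict_left_mono) auto
    also have "\<dots> = e\<^sup>2" using s by simp
    finally have "\<bar>X k - X l\<bar>\<^sup>2 < e\<^sup>2" by simp
    then show "dist (X k) (X l) < e" using power2_less_imp_less[of "\<bar>X k - X l\<bar>" e] e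
      by (simp add: dist_real_def)
  qed
qed

lemma young_sum:
  fixes a v :: "'i \<Rightarrow> real"
  assumes t: "0 < t"
  shows "-(t/2 * (\<Sum>r\<in>R. (a r)\<^sup>2) + (\<Sum>r\<in>R. (v r)\<^sup>2) / (2*t)) \<le> (\<Sum>r\<in>R. a r * v r)"
proof -
  have "-(t/2 * (a r)\<^sup>2 + (v r)\<^sup>2 / (2*t)) \<le> a r * v r" for r
  proof -
    have "0 \<le> (t * a r + v r)\<^sup>2 / (2*t)" using t by simp
    also have "\<dots> = t/2 * (a r)\<^sup>2 + (v r)\<^sup>2 / (2*t) + a r * v r"
      using t by (simp add: field_simps power2_eq_square)
    finally show ?thesis by simp
  qed
  then have "(\<Sum>r\<in>R. -(t/2 * (a r)\<^sup>2 + (v r)\<^sup>2 / (2*t))) \<le> (\<Sum>r\<in>R. a r * v r)"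
    by (rule sum_mono)
  then show ?thesis
    by (simp add: sum_negf sum_subtractf sum_distrib_left sum_divide_distrib)
qed

(* Optimising the Young parameter: if the bound holds for every t > 0 then it holds for the best
   choice t = c/sigma.  The degenerate case c = 0 forces P >= 0. *)
lemma young_optimize:
  fixes P N X c \<sigma> :: real
  assumes \<sigma>: "0 < \<sigma>" and c: "0 \<le> c" and N: "0 \<le> N" and X: "0 \<le> X"
    and young: "\<And>t. 0 < t \<Longrightarrow> -(t/2 * N + c * X / (2*t)) \<le> P"
  shows "-(\<sigma>/2 * X + c/\<sigma>/2 * N) \<le> P"
proof (cases "c = 0")
  case False
  then have t: "0 < c / \<sigma>" using c \<sigma> by simp
  have "c/\<sigma>/2 * N + c * X / (2 * (c/\<sigma>)) = \<sigma>/2 * X + c/\<sigma>/2 * N"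
    using False \<sigma> by (simp add: field_simps)
  then show ?thesis using young[OF t] by simp
next
  case True
  have "0 \<le> P"
  proof (rule ccontr)
    assume "\<not> 0 \<le> P"
    then have P: "P < 0" by simp
    define t where "t = -2*P/(N+1)"
    have t: "0 < t" unfolding t_def using N P by (intro divide_pos_pos) auto
    have "t/2 * N = - (P * (N/(N+1)))" using N by (simp add: t_def field_simps)
    moreover have "-(t/2 * N) \<le> P" using young[OF t] True by simp
    ultimately have "P * (N/(N+1)) \<le> P" by linarith
    moreover have "P < P * (N/(N+1))"
      using mult_less_cancel_left_neg[OF P, of 1 "N/(N+1)"] N by simp
    ultimately show False by simp
  qed
  moreover have "0 \<le> \<sigma>/2 * X" using \<sigma> X by simp
  ultimately show ?thesis using True by simp
qed

lemma strongly_convex_plus_linear_bounded_below: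
  assumes sc: "strongly_convex_vec m f \<sigma>" and \<sigma>: "0 < \<sigma>"
    and g: "has_grad_vec m f g (\<lambda>k. 0)" and z: "z \<in> vecs m"
  shows "f (\<lambda>k. 0) - innern m (\<lambda>k. g k + a k) (\<lambda>k. g k + a k) / (2*\<sigma>) \<le> f z + innern m a z"
proof -
  have "f (\<lambda>k. 0) + innern m g z + \<sigma>/2 * innern m z z \<le> f z"
    using strongly_convex_first_order[OF sc g _ z] by (simp add: vecs_def)
  moreover have "-(\<sigma>/2 * innern m z z + innern m (\<lambda>k. g k + a k) (\<lambda>k. g k + a k) / (2*\<sigma>))
      \<le> innern m (\<lambda>k. g k + a k) z"
    using young_sum[OF \<sigma>, of z "{..<m}" "\<lambda>k. g k + a k"]
    by (simp add: innern_def power2_eq_square mult.commute)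
  moreover have "innern m (\<lambda>k. g k + a k) z = innern m g z + innern m a z"
    by (simp add: innern_def algebra_simps sum.distrib)
  ultimately show ?thesis by linarith
qed

definition col_sq :: "nat \<Rightarrow> (nat \<Rightarrow> nat) \<Rightarrow> (nat \<Rightarrow> nat) \<Rightarrow> (nat \<Rightarrow> nat)
    \<Rightarrow> (nat \<Rightarrow> nat \<Rightarrow> nat \<Rightarrow> nat \<Rightarrow> real) \<Rightarrow> (nat \<Rightarrow> nat \<Rightarrow> nat \<Rightarrow> nat \<Rightarrow> real)
    \<Rightarrow> (nat \<Rightarrow> nat \<Rightarrow> bool) \<Rightarrow> nat \<Rightarrow> (nat \<Rightarrow> real) \<Rightarrow> real" where
  "col_sq Mb n p q A C E i x = (\<Sum>j\<in>{j. j < Mb \<and> E j i}.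
     (\<Sum>r<p j. (\<Sum>k<n i. A j i r k * x k)\<^sup>2) + (\<Sum>r<q j. (\<Sum>k<n i. C j i r k * x k)\<^sup>2))"

lemma col_sq_nonneg: "0 \<le> col_sq Mb n p q A C E i x"
  unfolding col_sq_def by (intro sum_nonneg add_nonneg_nonneg) auto

lemma col_sq_scale: "col_sq Mb n p q A C E i (\<lambda>k. t * x k) = t\<^sup>2 * col_sq Mb n p q A C E i x"
  unfolding col_sq_def
  by (simp add: sum_distrib_left[symmetric] mult.left_commute[of _ t] power_mult_distrib distrib_left)
     (simp add: sum_distrib_left distrib_left)

lemma col_spec_norm_eq:
  "col_spec_norm Mb n p q A C E i =
     (SUP x\<in>{x\<in>vecs (n i). normn (n i) x \<le> 1}. sqrt (col_sq Mb n p q A C E i x))"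
  unfolding col_spec_norm_def col_sq_def by simp

(* Crude bound on a linear form over the unit cube, used to show the supremum defining the
   spectral norm is finite. *)
lemma lin_form_sq_le:
  fixes a x :: "nat \<Rightarrow> real"
  assumes "\<And>k. k < m \<Longrightarrow> \<bar>x k\<bar> \<le> 1"
  shows "(\<Sum>k<m. a k * x k)\<^sup>2 \<le> (\<Sum>k<m. \<bar>a k\<bar>)\<^sup>2"
proof -
  have "\<bar>\<Sum>k<m. a k * x k\<bar> \<le> (\<Sum>k<m. \<bar>a k * x k\<bar>)" by (rule sum_abs)
  also have "\<dots> \<le> (\<Sum>k<m. \<bar>a k\<bar>)"
    using assms by (intro sum_mono) (simp add: abs_mult mult_left_le)
  finally have "\<bar>\<Sum>k<m. a k * x k\<bar>\<^sup>2 \<le> (\<Sum>k<m. \<bar>a k\<bar>)\<^sup>2"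
    by (intro power_mono) auto
  then show ?thesis by simp
qed

lemma col_sq_bdd_above:
  "bdd_above ((\<lambda>x. sqrt (col_sq Mb n p q A C E i x)) ` {x\<in>vecs (n i). normn (n i) x \<le> 1})"
proof (rule bdd_aboveI2)
  fix x assume "x \<in> {x\<in>vecs (n i). normn (n i) x \<le> 1}"
  then have "(normn (n i) x)\<^sup>2 \<le> 1" by (simp add: normn_nonneg power_le_one)
  then have "innern (n i) x x \<le> 1" by (simp add: normn_sq)
  then have "\<bar>x k\<bar> \<le> 1" if "k < n i" for k
    using coord_sq_le_innern[OF that, of x] by (metis abs_square_le_1 order_trans)
  then have "col_sq Mb n p q A C E i x \<le> (\<Sum>j\<in>{j. j < Mb \<and> E j i}.
      (\<Sum>r<p j. (\<Sum>k<n i. \<bar>A j i r k\<bar>)\<^sup>2) + (\<Sum>r<q j. (\<Sum>k<n i. \<bar>C j i r k\<bar>)\<^sup>2))"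
    unfolding col_sq_def by (intro sum_mono add_mono lin_form_sq_le) auto
  then show "sqrt (col_sq Mb n p q A C E i x) \<le> sqrt (\<Sum>j\<in>{j. j < Mb \<and> E j i}.
      (\<Sum>r<p j. (\<Sum>k<n i. \<bar>A j i r k\<bar>)\<^sup>2) + (\<Sum>r<q j. (\<Sum>k<n i. \<bar>C j i r k\<bar>)\<^sup>2))"
    by simp
qed

lemma col_sq_le_spec_norm:
  assumes x: "x \<in> vecs (n i)"
  shows "col_sq Mb n p q A C E i x \<le> (col_spec_norm Mb n p q A C E i)\<^sup>2 * innern (n i) x x"
proof -
  define s where "s = col_spec_norm Mb n p q A C E i"
  have on_ball: "sqrt (col_sq Mb n p q A C E i y) \<le> s"
    if "y \<in> {x\<in>vecs (n i). normn (n i) x \<le> 1}" for y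
    unfolding s_def col_spec_norm_eq using col_sq_bdd_above that by (rule cSUP_upper2) simp
  show ?thesis
  proof (cases "innern (n i) x x = 0")
    case True
    then have "\<forall>k\<in>{..<n i}. x k * x k = 0" unfolding innern_def
      by (subst sum_nonneg_eq_0_iff[symmetric]) auto
    then have "col_sq Mb n p q A C E i x = 0" unfolding col_sq_def by simp
    then show ?thesis using True by simp
  next
    case False
    define N where "N = normn (n i) x"
    have N: "0 < N" using False innern_nonneg[of "n i" x] by (simp add: N_def normn_def)
    define y where "y = (\<lambda>k. (1/N) * x k)"
    have "normn (n i) y = (1/N) * N" unfolding y_def N_def using N
      by (intro normn_scale) (simp add: N_def)
    then have "normn (n i) y = 1" using N by simp
    moreover have "y \<in> vecs (n i)" using x by (simp add: vecs_def y_def)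
    ultimately have "sqrt (col_sq Mb n p q A C E i y) \<le> s" by (intro on_ball) simp
    then have "(sqrt (col_sq Mb n p q A C E i y))\<^sup>2 \<le> s\<^sup>2" by (intro power_mono) (simp_all add: col_sq_nonneg)
    then have "col_sq Mb n p q A C E i y \<le> s\<^sup>2" by (simp add: col_sq_nonneg)
    then have "(1/N)\<^sup>2 * col_sq Mb n p q A C E i x \<le> s\<^sup>2" unfolding y_def col_sq_scale .
    then have "col_sq Mb n p q A C E i x \<le> s\<^sup>2 * N\<^sup>2" using N by (simp add: field_simps)
    then show ?thesis by (simp add: s_def N_def normn_sq)
  qed
qed

definition dual_block_sq :: "(nat \<Rightarrow> nat) \<Rightarrow> (nat \<Rightarrow> nat) \<Rightarrow> (nat \<Rightarrow> nat \<Rightarrow> real)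
    \<Rightarrow> (nat \<Rightarrow> nat \<Rightarrow> real) \<Rightarrow> nat \<Rightarrow> real" where
  "dual_block_sq p q \<nu> \<mu> j = (\<Sum>r<p j. (\<nu> j r)\<^sup>2) + (\<Sum>r<q j. (\<mu> j r)\<^sup>2)"

lemma dual_block_sq_nonneg: "0 \<le> dual_block_sq p q \<nu> \<mu> j"
  unfolding dual_block_sq_def by (intro add_nonneg_nonneg sum_nonneg) auto

(* The key per-column estimate: the coupling <d, G_i x> is bounded below by -(sigma_i/2)|x|^2 -
   (L_d_i/2) |d restricted to Nbar_i|^2.  Sparsity restricts the pairing to the blocks j in
   Nbar_i, Young's inequality with the optimal parameter and the spectral norm bound do the rest. *)
lemma cross_block:
  fixes i :: nat and x :: "nat \<Rightarrow> real"
  assumes sparse: "\<forall>j<Mb. \<not> E j i \<longrightarrow>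
      (\<forall>r<p j. \<forall>k<n i. A j i r k = 0) \<and> (\<forall>r<q j. \<forall>k<n i. C j i r k = 0)"
    and \<sigma>: "0 < \<sigma> i" and x: "x \<in> vecs (n i)"
  shows "-(\<sigma> i/2 * innern (n i) x x
           + Ld Mb n p q A C E \<sigma> i/2 * (\<Sum>j\<in>{j. j < Mb \<and> E j i}. dual_block_sq p q dn dm j))
    \<le> (\<Sum>j<Mb. \<Sum>r<p j. dn j r * (\<Sum>k<n i. A j i r k * x k))
      + (\<Sum>j<Mb. \<Sum>r<q j. dm j r * (\<Sum>k<n i. C j i r k * x k))"
proof -
  define S where "S = {j. j < Mb \<and> E j i}"
  define V where "V j r = (\<Sum>k<n i. A j i r k * x k)" for j r
  define U where "U j r = (\<Sum>k<n i. C j i r k * x k)" for j r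
  define P where "P = (\<Sum>j\<in>S. (\<Sum>r<p j. dn j r * V j r) + (\<Sum>r<q j. dm j r * U j r))"
  define N where "N = (\<Sum>j\<in>S. dual_block_sq p q dn dm j)"
  define s where "s = col_spec_norm Mb n p q A C E i"
  have restrict: "(\<Sum>j<Mb. \<Sum>r<p j. dn j r * V j r) + (\<Sum>j<Mb. \<Sum>r<q j. dm j r * U j r) = P"
  proof -
    have "(\<Sum>j<Mb. \<Sum>r<p j. dn j r * V j r) + (\<Sum>j<Mb. \<Sum>r<q j. dm j r * U j r)
        = (\<Sum>j<Mb. (\<Sum>r<p j. dn j r * V j r) + (\<Sum>r<q j. dm j r * U j r))"
      by (simp add: sum.distrib)
    also have "\<dots> = P" unfolding P_def
      by (rule sum.mono_neutral_right) (use sparse in \<open>auto simp: S_def V_def U_def\<close>)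
    finally show ?thesis .
  qed
  have young: "-(t/2 * N + s\<^sup>2 * innern (n i) x x / (2*t)) \<le> P" if t: "0 < t" for t
  proof -
    have "(\<Sum>j\<in>S. -(t/2 * (\<Sum>r<p j. (dn j r)\<^sup>2) + (\<Sum>r<p j. (V j r)\<^sup>2) / (2*t))
                   - (t/2 * (\<Sum>r<q j. (dm j r)\<^sup>2) + (\<Sum>r<q j. (U j r)\<^sup>2) / (2*t))) \<le> P"
      unfolding P_def
    proof (rule sum_mono)
      fix j
      show "-(t/2 * (\<Sum>r<p j. (dn j r)\<^sup>2) + (\<Sum>r<p j. (V j r)\<^sup>2) / (2*t))
            - (t/2 * (\<Sum>r<q j. (dm j r)\<^sup>2) + (\<Sum>r<q j. (U j r)\<^sup>2) / (2*t))
          \<le> (\<Sum>r<p j. dn j r * V j r) + (\<Sum>r<q j. dm j r * U j r)"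
        using young_sum[OF t, of "dn j" "{..<p j}" "V j"] young_sum[OF t, of "dm j" "{..<q j}" "U j"]
        by linarith
    qed
    moreover have "(\<Sum>j\<in>S. -(t/2 * (\<Sum>r<p j. (dn j r)\<^sup>2) + (\<Sum>r<p j. (V j r)\<^sup>2) / (2*t))
                   - (t/2 * (\<Sum>r<q j. (dm j r)\<^sup>2) + (\<Sum>r<q j. (U j r)\<^sup>2) / (2*t)))
        = -(t/2 * N + col_sq Mb n p q A C E i x / (2*t))"
      by (simp add: N_def dual_block_sq_def col_sq_def S_def V_def U_def sum_negf sum.distrib
          sum_distrib_left sum_divide_distrib sum_subtractf algebra_simps add_divide_distrib)
    moreover have "col_sq Mb n p q A C E i x / (2*t) \<le> s\<^sup>2 * innern (n i) x x / (2*t)"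
      using col_sq_le_spec_norm[where n=n and i=i, OF x] t by (simp add: s_def divide_right_mono)
    ultimately show ?thesis by linarith
  qed
  have "-(\<sigma> i/2 * innern (n i) x x + s\<^sup>2/\<sigma> i/2 * N) \<le> P"
    using \<sigma> young by (intro young_optimize)
      (simp_all add: innern_nonneg N_def dual_block_sq_nonneg sum_nonneg)
  then show ?thesis using restrict by (simp add: Ld_def s_def S_def N_def V_def U_def)
qed

lemma pairing_blk_mult:
  fixes M Mb :: nat
  shows "(\<Sum>j<Mb. \<Sum>r<p j. d j r * blk_mult M n A w j r)
     = (\<Sum>i<M. \<Sum>j<Mb. \<Sum>r<p j. d j r * (\<Sum>k<n i. A j i r k * w i k))"
proof -
  have "(\<Sum>j<Mb. \<Sum>r<p j. d j r * blk_mult M n A w j r)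
      = (\<Sum>j<Mb. \<Sum>i<M. \<Sum>r<p j. d j r * (\<Sum>k<n i. A j i r k * w i k))"
    unfolding blk_mult_def sum_distrib_left by (intro sum.cong refl sum.swap)
  also have "\<dots> = (\<Sum>i<M. \<Sum>j<Mb. \<Sum>r<p j. d j r * (\<Sum>k<n i. A j i r k * w i k))"
    by (rule sum.swap)
  finally show ?thesis .
qed

lemma Wnorm_sq_by_columns:
  fixes M Mb :: nat
  shows "Wnorm_sq M Mb n p q A C E \<sigma> dn dm
     = (\<Sum>i<M. Ld Mb n p q A C E \<sigma> i * (\<Sum>j\<in>{j. j < Mb \<and> E j i}. dual_block_sq p q dn dm j))"
proof -
  have rows: "{j. j < Mb \<and> E j i} = {j\<in>{..<Mb}. E j i}" for i by auto
  have cols: "{i. i < M \<and> E j i} = {i\<in>{..<M}. E j i}" for j by auto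
  have "Wnorm_sq M Mb n p q A C E \<sigma> dn dm
      = (\<Sum>j<Mb. \<Sum>i\<in>{i\<in>{..<M}. E j i}. Ld Mb n p q A C E \<sigma> i * dual_block_sq p q dn dm j)"
    unfolding Wnorm_sq_def Wweight_def dual_block_sq_def cols sum_distrib_right ..
  also have "\<dots> = (\<Sum>i<M. \<Sum>j\<in>{j\<in>{..<Mb}. E j i}. Ld Mb n p q A C E \<sigma> i * dual_block_sq p q dn dm j)"
    by (rule sum.swap_restrict[symmetric]) simp_all
  finally show ?thesis unfolding rows sum_distrib_left .
qed

lemma cross_term_lower_bound:
  fixes M Mb :: nat
  assumes sparsity: "\<forall>j<Mb. \<forall>i<M. \<not> E j i \<longrightarrow>
      (\<forall>r<p j. \<forall>k<n i. A j i r k = 0) \<and> (\<forall>r<q j. \<forall>k<n i. C j i r k = 0)"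
    and sigma_pos: "\<forall>i<M. 0 < \<sigma> i"
    and w: "\<forall>i<M. w i \<in> vecs (n i)"
  shows "-(\<Sum>i<M. \<sigma> i/2 * innern (n i) (w i) (w i)) - 1/2 * Wnorm_sq M Mb n p q A C E \<sigma> dn dm
     \<le> (\<Sum>j<Mb. \<Sum>r<p j. dn j r * blk_mult M n A w j r)
       + (\<Sum>j<Mb. \<Sum>r<q j. dm j r * blk_mult M n C w j r)"
proof -
  have "(\<Sum>i<M. -(\<sigma> i/2 * innern (n i) (w i) (w i)
           + Ld Mb n p q A C E \<sigma> i/2 * (\<Sum>j\<in>{j. j < Mb \<and> E j i}. dual_block_sq p q dn dm j)))
    \<le> (\<Sum>i<M. (\<Sum>j<Mb. \<Sum>r<p j. dn j r * (\<Sum>k<n i. A j i r k * w i k))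
              + (\<Sum>j<Mb. \<Sum>r<q j. dm j r * (\<Sum>k<n i. C j i r k * w i k)))"
    using sparsity sigma_pos w by (intro sum_mono cross_block) auto
  then show ?thesis
    unfolding pairing_blk_mult Wnorm_sq_by_columns
    by (simp add: sum.distrib sum_subtractf sum_negf sum_distrib_left sum_divide_distrib)
qed

lemma zdom_vecs: "z \<in> zdom M n \<Longrightarrow> i < M \<Longrightarrow> z i \<in> vecs (n i)"
  by (auto simp: zdom_def vecs_def)

lemma zdom_lincomb: "x \<in> zdom M n \<Longrightarrow> y \<in> zdom M n \<Longrightarrow> (\<lambda>i k. t * x i k + s * y i k) \<in> zdom M n"
  by (auto simp: zdom_def)

lemma blk_mult_lincomb:
  "blk_mult M n A (\<lambda>i k. t * x i k + s * y i k) j r = t * blk_mult M n A x j r + s * blk_mult M n A y j r"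
  by (simp add: blk_mult_def algebra_simps sum.distrib sum_distrib_left)

lemma blk_mult_diff: "blk_mult M n A (\<lambda>i k. x i k - y i k) j r = blk_mult M n A x j r - blk_mult M n A y j r"
  by (simp add: blk_mult_def algebra_simps sum_subtractf)

lemma lagrangian_convex_comb:
  "lagrangian M Mb n p q A C b c f (\<lambda>i k. t * x i k + (1-t) * y i k) \<nu> \<mu>
     = (\<Sum>i<M. f i (\<lambda>k. t * x i k + (1-t) * y i k))
       + t * (lagrangian M Mb n p q A C b c f x \<nu> \<mu> - (\<Sum>i<M. f i (x i)))
       + (1-t) * (lagrangian M Mb n p q A C b c f y \<nu> \<mu> - (\<Sum>i<M. f i (y i)))"
  unfolding lagrangian_def blk_mult_lincomb
  by (simp add: algebra_simps sum.distrib sum_distrib_left sum_subtractf)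

lemma pairing_shift:
  fixes \<nu> \<nu>' X Xs b :: "nat \<Rightarrow> nat \<Rightarrow> real"
  shows "(\<Sum>j<Mb. \<Sum>r<p j. \<nu> j r * (X j r - b j r))
    = (\<Sum>j<Mb. \<Sum>r<p j. \<nu>' j r * (X j r - b j r))
      + (\<Sum>j<Mb. \<Sum>r<p j. (Xs j r - b j r) * (\<nu> j r - \<nu>' j r))
      + (\<Sum>j<Mb. \<Sum>r<p j. (\<nu> j r - \<nu>' j r) * (X j r - Xs j r))"
proof -
  have "(\<Sum>j<Mb. \<Sum>r<p j. \<nu> j r * (X j r - b j r))
      = (\<Sum>j<Mb. \<Sum>r<p j. \<nu>' j r * (X j r - b j r) + (Xs j r - b j r) * (\<nu> j r - \<nu>' j r)
           + (\<nu> j r - \<nu>' j r) * (X j r - Xs j r))"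
    by (intro sum.cong refl) (simp add: algebra_simps)
  then show ?thesis by (simp add: sum.distrib)
qed

lemma lagrangian_dual_shift:
  "lagrangian M Mb n p q A C b c f z \<nu> \<mu>
   = lagrangian M Mb n p q A C b c f z \<nu>' \<mu>'
     + ((\<Sum>j<Mb. \<Sum>r<p j. (blk_mult M n A zs j r - b j r) * (\<nu> j r - \<nu>' j r))
        + (\<Sum>j<Mb. \<Sum>r<q j. (blk_mult M n C zs j r - c j r) * (\<mu> j r - \<mu>' j r)))
     + ((\<Sum>j<Mb. \<Sum>r<p j. (\<nu> j r - \<nu>' j r) * blk_mult M n A (\<lambda>i k. z i k - zs i k) j r)
        + (\<Sum>j<Mb. \<Sum>r<q j. (\<mu> j r - \<mu>' j r) * blk_mult M n C (\<lambda>i k. z i k - zs i k) j r))"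
  unfolding lagrangian_def blk_mult_diff
    pairing_shift[where \<nu>=\<nu> and \<nu>'=\<nu>' and Xs="blk_mult M n A zs"]
    pairing_shift[where \<nu>=\<mu> and \<nu>'=\<mu>' and Xs="blk_mult M n C zs"]
  by simp

definition blk_adj :: "nat \<Rightarrow> (nat \<Rightarrow> nat) \<Rightarrow> (nat \<Rightarrow> nat \<Rightarrow> nat \<Rightarrow> nat \<Rightarrow> real)
    \<Rightarrow> (nat \<Rightarrow> nat \<Rightarrow> real) \<Rightarrow> nat \<Rightarrow> nat \<Rightarrow> real" where
  "blk_adj Mb p A d i k = (\<Sum>j<Mb. \<Sum>r<p j. d j r * A j i r k)"

lemma pairing_blk_adj:
  fixes M Mb :: nat
  shows "(\<Sum>j<Mb. \<Sum>r<p j. d j r * blk_mult M n A z j r)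
           = (\<Sum>i<M. innern (n i) (blk_adj Mb p A d i) (z i))"
proof -
  have "(\<Sum>j<Mb. \<Sum>r<p j. d j r * (\<Sum>k<n i. A j i r k * z i k))
      = innern (n i) (blk_adj Mb p A d i) (z i)" for i
  proof -
    have "(\<Sum>j<Mb. \<Sum>r<p j. d j r * (\<Sum>k<n i. A j i r k * z i k))
        = (\<Sum>j<Mb. \<Sum>k<n i. \<Sum>r<p j. d j r * A j i r k * z i k)"
      unfolding sum_distrib_left mult.assoc by (intro sum.cong refl sum.swap)
    also have "\<dots> = (\<Sum>k<n i. \<Sum>j<Mb. \<Sum>r<p j. d j r * A j i r k * z i k)"
      by (rule sum.swap)
    finally show ?thesis by (simp add: innern_def blk_adj_def sum_distrib_right)
  qed
  then show ?thesis unfolding pairing_blk_mult by simp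
qed

lemma lagrangian_by_blocks:
  fixes M Mb :: nat
  shows "lagrangian M Mb n p q A C b c f z \<nu> \<mu>
     = (\<Sum>i<M. f i (z i) + innern (n i) (\<lambda>k. blk_adj Mb p A \<nu> i k + blk_adj Mb q C \<mu> i k) (z i))
       - ((\<Sum>j<Mb. \<Sum>r<p j. \<nu> j r * b j r) + (\<Sum>j<Mb. \<Sum>r<q j. \<mu> j r * c j r))"
proof -
  have "innern m (\<lambda>k. a k + a' k) x = innern m a x + innern m a' x" for m a a' x
    by (simp add: innern_def algebra_simps sum.distrib)
  then show ?thesis
    unfolding lagrangian_def
    by (simp add: right_diff_distrib sum_subtractf sum.distrib pairing_blk_adj)
qed

locale separable_program =
  fixes M Mb :: nat and n p q :: "nat \<Rightarrow> nat"
    and A C :: "nat \<Rightarrow> nat \<Rightarrow> nat \<Rightarrow> nat \<Rightarrow> real"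
    and b c :: "nat \<Rightarrow> nat \<Rightarrow> real"
    and f :: "nat \<Rightarrow> (nat \<Rightarrow> real) \<Rightarrow> real"
    and \<sigma> :: "nat \<Rightarrow> real"
  assumes sigma_pos: "\<forall>i<M. 0 < \<sigma> i"
    and strong: "\<forall>i<M. strongly_convex_vec (n i) (f i) (\<sigma> i)"
    and differentiable: "\<forall>i<M. \<forall>x\<in>vecs (n i). \<exists>g. has_grad_vec (n i) (f i) g x"
begin

abbreviation Lg :: "(nat \<Rightarrow> nat \<Rightarrow> real) \<Rightarrow> (nat \<Rightarrow> nat \<Rightarrow> real) \<Rightarrow> (nat \<Rightarrow> nat \<Rightarrow> real) \<Rightarrow> real"
  where "Lg z \<nu> \<mu> \<equiv> lagrangian M Mb n p q A C b c f z \<nu> \<mu>"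

definition sdist :: "(nat \<Rightarrow> nat \<Rightarrow> real) \<Rightarrow> (nat \<Rightarrow> nat \<Rightarrow> real) \<Rightarrow> real" where
  "sdist x y = (\<Sum>i<M. \<sigma> i/2 * innern (n i) (\<lambda>k. x i k - y i k) (\<lambda>k. x i k - y i k))"

lemma lagrangian_strongly_convex:
  assumes x: "x \<in> zdom M n" and y: "y \<in> zdom M n" and t: "0 \<le> t" "t \<le> 1"
  shows "Lg (\<lambda>i k. t * x i k + (1-t) * y i k) \<nu> \<mu>
           \<le> t * Lg x \<nu> \<mu> + (1-t) * Lg y \<nu> \<mu> - t * (1-t) * sdist x y"
proof -
  have "(\<Sum>i<M. f i (\<lambda>k. t * x i k + (1-t) * y i k))
     \<le> (\<Sum>i<M. t * f i (x i) + (1-t) * f i (y i)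
                  - \<sigma> i/2 * t * (1-t) * (normn (n i) (\<lambda>k. x i k - y i k))\<^sup>2)"
    using strong zdom_vecs[OF x] zdom_vecs[OF y] t
    by (intro sum_mono) (simp add: strongly_convex_vec_def)
  also have "\<dots> = t * (\<Sum>i<M. f i (x i)) + (1-t) * (\<Sum>i<M. f i (y i)) - t * (1-t) * sdist x y"
    by (simp add: sdist_def normn_sq sum.distrib sum_subtractf sum_distrib_left algebra_simps)
  finally show ?thesis unfolding lagrangian_convex_comb by (simp add: algebra_simps)
qed

(* Each f_i dominates a concave quadratic, so the Lagrangian is bounded below on the primal
   space. *)
lemma lagrangian_bounded_below: "\<exists>K. \<forall>z\<in>zdom M n. K \<le> Lg z \<nu> \<mu>"
proof -
  have "\<forall>i. \<exists>g. i < M \<longrightarrow> has_grad_vec (n i) (f i) g (\<lambda>k. 0)"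
    using differentiable by (simp add: vecs_def)
  then obtain g where g: "\<And>i. i < M \<Longrightarrow> has_grad_vec (n i) (f i) (g i) (\<lambda>k. 0)"
    by metis
  define a where "a i k = blk_adj Mb p A \<nu> i k + blk_adj Mb q C \<mu> i k" for i k
  define K where "K = (\<Sum>i<M. f i (\<lambda>k. 0)
        - innern (n i) (\<lambda>k. g i k + a i k) (\<lambda>k. g i k + a i k) / (2 * \<sigma> i))
      - ((\<Sum>j<Mb. \<Sum>r<p j. \<nu> j r * b j r) + (\<Sum>j<Mb. \<Sum>r<q j. \<mu> j r * c j r))"
  have "K \<le> Lg z \<nu> \<mu>" if z: "z \<in> zdom M n" for z
    unfolding K_def lagrangian_by_blocks a_def[symmetric]
    using strong sigma_pos g zdom_vecs[OF z]
    by (intro diff_right_mono sum_mono strongly_convex_plus_linear_bounded_below) auto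
  then show ?thesis by blast
qed

lemma lagrangian_seq_continuous:
  assumes zs: "\<And>l. zs l \<in> zdom M n" and zl: "zl \<in> zdom M n"
    and lim: "\<And>i k. (\<lambda>l. zs l i k) \<longlonglongrightarrow> zl i k"
  shows "(\<lambda>l. Lg (zs l) \<nu> \<mu>) \<longlonglongrightarrow> Lg zl \<nu> \<mu>"
proof -
  have "(\<lambda>l. f i (zs l i)) \<longlonglongrightarrow> f i (zl i)" if i: "i < M" for i
  proof -
    obtain g where g: "has_grad_vec (n i) (f i) g (zl i)"
      using differentiable zdom_vecs[OF zl i] i by blast
    show ?thesis
      using zdom_vecs[OF zl i] zdom_vecs[OF zs i] lim by (rule has_grad_vec_seq_continuous[OF g])
  qed
  then have fsum: "(\<lambda>l. \<Sum>i<M. f i (zs l i)) \<longlonglongrightarrow> (\<Sum>i<M. f i (zl i))"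
    by (intro tendsto_sum) auto
  show ?thesis
    unfolding lagrangian_def blk_mult_def by (intro tendsto_add fsum; intro tendsto_intros lim)
qed

(* Two points whose Lagrangian values are close to the infimum are close to each other (midpoint
   argument). *)
lemma near_minimizers_close:
  assumes low: "\<forall>z\<in>zdom M n. m0 \<le> Lg z \<nu> \<mu>"
    and x: "x \<in> zdom M n" "Lg x \<nu> \<mu> \<le> m0 + \<epsilon>"
    and y: "y \<in> zdom M n" "Lg y \<nu> \<mu> \<le> m0 + \<delta>"
  shows "sdist x y \<le> 2 * (\<epsilon> + \<delta>)"
proof -
  have "Lg (\<lambda>i k. 1/2 * x i k + (1 - 1/2) * y i k) \<nu> \<mu>
      \<le> 1/2 * Lg x \<nu> \<mu> + (1 - 1/2) * Lg y \<nu> \<mu> - 1/2 * (1 - 1/2) * sdist x y"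
    using x y by (intro lagrangian_strongly_convex) auto
  moreover have "m0 \<le> Lg (\<lambda>i k. 1/2 * x i k + (1 - 1/2) * y i k) \<nu> \<mu>"
    using low zdom_lincomb[OF x(1) y(1)] by blast
  ultimately show ?thesis using x y by simp
qed

lemma coord_sq_le_sdist:
  assumes i: "i < M" and k: "k < n i"
  shows "\<sigma> i/2 * (x i k - y i k)\<^sup>2 \<le> sdist x y"
proof -
  have "\<sigma> i/2 * (x i k - y i k)\<^sup>2 \<le> \<sigma> i/2 * innern (n i) (\<lambda>k. x i k - y i k) (\<lambda>k. x i k - y i k)"
    using sigma_pos i coord_sq_le_innern[OF k, of "\<lambda>k. x i k - y i k"] by simp
  also have "\<dots> \<le> sdist x y" unfolding sdist_def
    using i sigma_pos by (intro member_le_sum mult_nonneg_nonneg innern_nonneg) auto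
  finally show ?thesis .
qed

(* A minimising sequence is coordinatewise Cauchy, hence convergent in the primal space. *)
lemma minimizing_sequence_converges:
  assumes low: "\<forall>z\<in>zdom M n. m0 \<le> Lg z \<nu> \<mu>"
    and zs: "\<And>l. zs l \<in> zdom M n" and near: "\<And>l. Lg (zs l) \<nu> \<mu> \<le> m0 + inverse (real (Suc l))"
  obtains zl where "zl \<in> zdom M n" and "\<And>i k. (\<lambda>l. zs l i k) \<longlonglongrightarrow> zl i k"
proof -
  have "convergent (\<lambda>l. zs l i k)" for i k
  proof (cases "i < M \<and> k < n i")
    case True
    then have \<sigma>: "0 < \<sigma> i" using sigma_pos by blast
    have bound: "(zs l i k - zs l' i k)\<^sup>2 \<le> 4 / \<sigma> i * (inverse (real (Suc l)) + inverse (real (Suc l')))"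
      for l l'
    proof -
      define e where "e = inverse (real (Suc l)) + inverse (real (Suc l'))"
      have "\<sigma> i/2 * (zs l i k - zs l' i k)\<^sup>2 \<le> 2 * e"
        using coord_sq_le_sdist[of i k "zs l" "zs l'"] True
          near_minimizers_close[OF low zs near zs near, of l l']
        by (simp add: e_def)
      then have "(zs l i k - zs l' i k)\<^sup>2 \<le> 4 / \<sigma> i * e" using \<sigma> by (simp add: field_simps)
      then show ?thesis by (simp only: e_def)
    qed
    have "Cauchy (\<lambda>l. zs l i k)" using \<sigma> by (intro cauchy_of_sq_bound[OF _ bound]) simp
    then show ?thesis by (simp add: Cauchy_convergent_iff)
  next
    case False
    then have "(\<lambda>l. zs l i k) = (\<lambda>l. 0)" using zs by (simp add: zdom_def)
    then show ?thesis by (simp add: convergent_const)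
  qed
  then have lim: "(\<lambda>l. zs l i k) \<longlonglongrightarrow> lim (\<lambda>l. zs l i k)" for i k
    by (simp add: convergent_LIMSEQ_iff)
  moreover have "(\<lambda>i k. lim (\<lambda>l. zs l i k)) \<in> zdom M n"
    using zs by (simp add: zdom_def limI)
  ultimately show ?thesis using that by blast
qed

(* Existence of a minimiser of the Lagrangian: the limit of a minimising sequence attains the
   infimum. *)
lemma lagrangian_has_minimizer: "\<exists>z\<in>zdom M n. \<forall>z'\<in>zdom M n. Lg z \<nu> \<mu> \<le> Lg z' \<nu> \<mu>"
proof -
  define m0 where "m0 = (INF z\<in>zdom M n. Lg z \<nu> \<mu>)"
  have ne: "(\<lambda>i k. 0) \<in> zdom M n" by (simp add: zdom_def)
  have low: "\<forall>z\<in>zdom M n. m0 \<le> Lg z \<nu> \<mu>"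
    using lagrangian_bounded_below unfolding m0_def by (meson bdd_belowI2 cINF_lower)
  have "\<exists>z\<in>zdom M n. Lg z \<nu> \<mu> \<le> m0 + inverse (real (Suc l))" for l
  proof (rule ccontr)
    assume "\<not> ?thesis"
    then have "m0 + inverse (real (Suc l)) \<le> Lg z \<nu> \<mu>" if "z \<in> zdom M n" for z
      using that by fastforce
    then have "m0 + inverse (real (Suc l)) \<le> m0"
      unfolding m0_def using ne by (intro cINF_greatest) auto
    then show False by simp
  qed
  then obtain zs where zs: "\<And>l. zs l \<in> zdom M n"
    and near: "\<And>l. Lg (zs l) \<nu> \<mu> \<le> m0 + inverse (real (Suc l))"
    by metis
  obtain zl where zl: "zl \<in> zdom M n" and lim: "\<And>i k. (\<lambda>l. zs l i k) \<longlonglongrightarrow> zl i k"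
    using minimizing_sequence_converges[OF low zs near] by blast
  have "(\<lambda>l. Lg (zs l) \<nu> \<mu>) \<longlonglongrightarrow> m0"
  proof (rule tendsto_sandwich[of "\<lambda>l. m0" _ _ "\<lambda>l. m0 + inverse (real (Suc l))"])
    show "\<forall>\<^sub>F l in sequentially. m0 \<le> Lg (zs l) \<nu> \<mu>" using low zs by simp
    show "\<forall>\<^sub>F l in sequentially. Lg (zs l) \<nu> \<mu> \<le> m0 + inverse (real (Suc l))" using near by simp
    show "(\<lambda>l. m0 + inverse (real (Suc l))) \<longlonglongrightarrow> m0" by (rule LIMSEQ_inverse_real_of_nat_add)
  qed simp
  then have "Lg zl \<nu> \<mu> = m0"
    using lagrangian_seq_continuous[OF zs zl lim] LIMSEQ_unique by blast
  then show ?thesis using zl low by auto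
qed

lemma quadratic_growth:
  assumes zs: "zs \<in> zdom M n" and min: "\<forall>z'\<in>zdom M n. Lg zs \<nu> \<mu> \<le> Lg z' \<nu> \<mu>"
    and z: "z \<in> zdom M n"
  shows "Lg zs \<nu> \<mu> + sdist z zs \<le> Lg z \<nu> \<mu>"
proof (rule ccontr)
  define D where "D = Lg z \<nu> \<mu> - Lg zs \<nu> \<mu>"
  define S where "S = sdist z zs"
  assume "\<not> ?thesis"
  then have DS: "D < S" by (simp add: D_def S_def)
  have D: "0 \<le> D" using min z by (simp add: D_def)
  define t where "t = (S - D) / (2 * S)"
  have t: "0 < t" "t \<le> 1" using DS D by (simp_all add: t_def field_simps)
  have "Lg zs \<nu> \<mu> \<le> Lg (\<lambda>i k. t * z i k + (1-t) * zs i k) \<nu> \<mu>"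
    using min zdom_lincomb[OF z zs] by blast
  also have "\<dots> \<le> t * Lg z \<nu> \<mu> + (1-t) * Lg zs \<nu> \<mu> - t * (1-t) * S"
    unfolding S_def using lagrangian_strongly_convex[OF z zs] t by simp
  finally have "t * ((1-t) * S) \<le> t * D" by (simp add: D_def algebra_simps)
  then have "(1-t) * S \<le> D" using t by simp
  moreover have "(1-t) * S = (S + D) / 2" using DS D by (simp add: t_def field_simps)
  ultimately show False using DS by simp
qed

(* The minimiser is unique, by quadratic growth. *)
lemma minimizer_unique:
  assumes x: "x \<in> zdom M n" and mx: "\<forall>z'\<in>zdom M n. Lg x \<nu> \<mu> \<le> Lg z' \<nu> \<mu>"
    and y: "y \<in> zdom M n" and my: "\<forall>z'\<in>zdom M n. Lg y \<nu> \<mu> \<le> Lg z' \<nu> \<mu>"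
  shows "y = x"
proof -
  have "sdist y x \<le> 0" using quadratic_growth[OF x mx y] my x by fastforce
  have "y i k = x i k" if ik: "i < M" "k < n i" for i k
  proof -
    have "\<sigma> i/2 * (y i k - x i k)\<^sup>2 \<le> 0"
      using coord_sq_le_sdist[OF ik] \<open>sdist y x \<le> 0\<close> by (meson order_trans)
    moreover have "0 < \<sigma> i/2" using sigma_pos ik by simp
    ultimately have "(y i k - x i k)\<^sup>2 \<le> 0" by (simp add: mult_le_0_iff)
    then show ?thesis by simp
  qed
  moreover have "y i k = x i k" if "\<not> (i < M \<and> k < n i)" for i k
    using that x y by (simp add: zdom_def)
  ultimately show ?thesis by blast
qed

lemma zopt_minimizes:
  "zopt M Mb n p q A C b c f \<nu> \<mu> \<in> zdom M n \<and>
   (\<forall>z'\<in>zdom M n. Lg (zopt M Mb n p q A C b c f \<nu> \<mu>) \<nu> \<mu> \<le> Lg z' \<nu> \<mu>)"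
proof -
  have "\<exists>!z. z \<in> zdom M n \<and> (\<forall>z'\<in>zdom M n. Lg z \<nu> \<mu> \<le> Lg z' \<nu> \<mu>)"
    using lagrangian_has_minimizer minimizer_unique by (intro ex_ex1I) blast+
  then show ?thesis unfolding zopt_def by (rule theI')
qed

lemma dual_fun_at_zopt:
  "dual_fun M Mb n p q A C b c f \<nu> \<mu> = Lg (zopt M Mb n p q A C b c f \<nu> \<mu>) \<nu> \<mu>"
  unfolding dual_fun_def using zopt_minimizes[of \<nu> \<mu>]
  by (intro antisym cINF_lower cINF_greatest bdd_belowI2[where m="Lg (zopt M Mb n p q A C b c f \<nu> \<mu>) \<nu> \<mu>"]) auto

end

theorem lemma1:
  fixes M Mb :: nat and n p q :: "nat \<Rightarrow> nat"
    and A C :: "nat \<Rightarrow> nat \<Rightarrow> nat \<Rightarrow> nat \<Rightarrow> real"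
    and b c :: "nat \<Rightarrow> nat \<Rightarrow> real"
    and E :: "nat \<Rightarrow> nat \<Rightarrow> bool"
    and f :: "nat \<Rightarrow> (nat \<Rightarrow> real) \<Rightarrow> real"
    and \<sigma> L :: "nat \<Rightarrow> real"
    and \<nu> \<mu> \<nu>' \<mu>' :: "nat \<Rightarrow> nat \<Rightarrow> real"
  assumes sparsity: "\<forall>j<Mb. \<forall>i<M. \<not> E j i \<longrightarrow>
      (\<forall>r<p j. \<forall>k<n i. A j i r k = 0) \<and> (\<forall>r<q j. \<forall>k<n i. C j i r k = 0)"
    and sigma_pos: "\<forall>i<M. 0 < \<sigma> i"
    and strong: "\<forall>i<M. strongly_convex_vec (n i) (f i) (\<sigma> i)"
    and lipgrad: "\<forall>i<M. lipschitz_grad_vec (n i) (f i) (L i)"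
    and lam: "in_D Mb q \<mu>"
    and lam': "in_D Mb q \<mu>'"
  shows "dual_fun M Mb n p q A C b c f \<nu> \<mu>
     \<ge> dual_fun M Mb n p q A C b c f \<nu>' \<mu>'
        + ((\<Sum>j<Mb. \<Sum>r<p j. dual_grad_nu M Mb n p q A C b c f \<nu>' \<mu>' j r * (\<nu> j r - \<nu>' j r))
           + (\<Sum>j<Mb. \<Sum>r<q j. dual_grad_mu M Mb n p q A C b c f \<nu>' \<mu>' j r * (\<mu> j r - \<mu>' j r)))
        - 1/2 * Wnorm_sq M Mb n p q A C E \<sigma> (\<lambda>j r. \<nu> j r - \<nu>' j r) (\<lambda>j r. \<mu> j r - \<mu>' j r)"
proof -
  have "\<forall>i<M. \<forall>x\<in>vecs (n i). \<exists>g. has_grad_vec (n i) (f i) g x"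
    using lipgrad unfolding lipschitz_grad_vec_def by blast
  then interpret separable_program M Mb n p q A C b c f \<sigma>
    using sigma_pos strong by unfold_locales
  define zs where "zs = zopt M Mb n p q A C b c f \<nu>' \<mu>'"
  have zs: "zs \<in> zdom M n" and min: "\<forall>z'\<in>zdom M n. Lg zs \<nu>' \<mu>' \<le> Lg z' \<nu>' \<mu>'"
    using zopt_minimizes[of \<nu>' \<mu>'] by (simp_all add: zs_def)
  have "dual_fun M Mb n p q A C b c f \<nu>' \<mu>'
        + ((\<Sum>j<Mb. \<Sum>r<p j. dual_grad_nu M Mb n p q A C b c f \<nu>' \<mu>' j r * (\<nu> j r - \<nu>' j r))
           + (\<Sum>j<Mb. \<Sum>r<q j. dual_grad_mu M Mb n p q A C b c f \<nu>' \<mu>' j r * (\<mu> j r - \<mu>' j r)))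
        - 1/2 * Wnorm_sq M Mb n p q A C E \<sigma> (\<lambda>j r. \<nu> j r - \<nu>' j r) (\<lambda>j r. \<mu> j r - \<mu>' j r)
      \<le> Lg z \<nu> \<mu>" if z: "z \<in> zdom M n" for z
  proof -
    have "\<forall>i<M. (\<lambda>k. z i k - zs i k) \<in> vecs (n i)"
      using zdom_vecs[OF z] zdom_vecs[OF zs] by (simp add: vecs_def)
    from cross_term_lower_bound[OF sparsity sigma_pos this,
        where dn="\<lambda>j r. \<nu> j r - \<nu>' j r" and dm="\<lambda>j r. \<mu> j r - \<mu>' j r"]
    show ?thesis
      using quadratic_growth[OF zs min z] lagrangian_dual_shift[of M Mb n p q A C b c f z \<nu> \<mu> \<nu>' \<mu>' zs]
      unfolding dual_fun_at_zopt dual_grad_nu_def dual_grad_mu_def zs_def[symmetric] sdist_def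
      by linarith
  qed
  then show ?thesis
    unfolding dual_fun_def[of M Mb n p q A C b c f \<nu> \<mu>]
    by (intro cINF_greatest) (auto simp: zdom_def)
qed

end
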